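(* Let $m,n,k$ be positive integers and $i,j$ non-negative integers such that $i<\frac{n}{2}-1$ and $j<\frac{k}{2}-1$. Then $$|\mathrm{WHom}^{ij}(P_m,P_n\square P_k)|=\sum_{h=0}^{m-1}\binom{m-1}{h}\,|\mathrm{Hom}^i(P_{h+1},P_n)|\,|\mathrm{WHom}^j(P_{m-h},P_k)|.$$
   Context: For a positive integer $n$, $P_n$ denotes the path with vertex set $\{0,1,\dots,n-1\}$ and edge set $\{\{i,i+1\} : i=0,\dots,n-2\}$. The Cartesian product $P_n\square P_k$ has vertex set $\{0,\dots,n-1\}\times\{0,\dots,k-1\}$, with $\{(a,u),(b,v)\}$ an edge iff either $a=b$ and $\{u,v\}\in E(P_k)$, or $\{a,b\}\in E(P_n)$ and $u=v$. A homomorphism $f:G\to H$ is a map $V(G)\to V(H)$ with $\{f(x),f(y)\}\in E(H)$ for all $\{x,y\}\in E(G)$; a weak homomorphism is a map with $f(x)=f(y)$ or $\{f(x),f(y)\}\in E(H)$ for all $\{x,y\}\in E(G)$. $\mathrm{Hom}^i(P_a,P_n)$ is the set of homomorphisms $f:P_a\to P_n$ with $f(0)=i$; $\mathrm{WHom}^j(P_a,P_k)$ is the set of weak homomorphisms $f:P_a\to P_k$ with $f(0)=j$; $\mathrm{WHom}^{ij}(P_m,P_n\square P_k)$ is the set of weak homomorphisms $f:P_m\to P_n\square P_k$ with $f(0)=(i,j)$. *)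

theory Defs
  imports "HOL-Library.FuncSet"
begin

definition path_adj :: "nat \<Rightarrow> nat \<Rightarrow> nat \<Rightarrow> bool" where
  "path_adj n u v \<longleftrightarrow> u < n \<and> v < n \<and> (u + 1 = v \<or> v + 1 = u)"

definition prod_adj :: "nat \<Rightarrow> nat \<Rightarrow> nat \<times> nat \<Rightarrow> nat \<times> nat \<Rightarrow> bool" where
  "prod_adj n k x y \<longleftrightarrow>
     (fst x = fst y \<and> fst x < n \<and> path_adj k (snd x) (snd y)) \<or>
     (path_adj n (fst x) (fst y) \<and> snd x = snd y \<and> snd x < k)"

definition Hom_path :: "nat \<Rightarrow> nat \<Rightarrow> nat \<Rightarrow> (nat \<Rightarrow> nat) set" where
  "Hom_path a n i = {f \<in> {0..<a} \<rightarrow>\<^sub>E {0..<n}. f 0 = i \<and>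
      (\<forall>x. x + 1 < a \<longrightarrow> path_adj n (f x) (f (x + 1)))}"

definition WHom_path :: "nat \<Rightarrow> nat \<Rightarrow> nat \<Rightarrow> (nat \<Rightarrow> nat) set" where
  "WHom_path a k j = {f \<in> {0..<a} \<rightarrow>\<^sub>E {0..<k}. f 0 = j \<and>
      (\<forall>x. x + 1 < a \<longrightarrow> f x = f (x + 1) \<or> path_adj k (f x) (f (x + 1)))}"

definition WHom_grid :: "nat \<Rightarrow> nat \<Rightarrow> nat \<Rightarrow> nat \<Rightarrow> nat \<Rightarrow> (nat \<Rightarrow> nat \<times> nat) set" where
  "WHom_grid m n k i j = {f \<in> {0..<m} \<rightarrow>\<^sub>E ({0..<n} \<times> {0..<k}). f 0 = (i, j) \<and>
      (\<forall>x. x + 1 < m \<longrightarrow> f x = f (x + 1) \<or> prod_adj n k (f x) (f (x + 1)))}"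

end

theory Submission
  imports Defs
begin

text \<open>A weak walk in P_n \<box> P_k moves at each step either along an edge of P_n, keeping
  the second coordinate, or weakly in P_k, keeping the first. Stationary steps are of the second
  kind only, and since P_n has no loops the two kinds never overlap. Choosing which h of the
  m - 1 steps are of the first kind therefore splits the walk into a homomorphism P_(h+1) \<rightarrow> P_n
  and a weak homomorphism P_(m-h) \<rightarrow> P_k. Formally, both sides satisfy the same first-step
  recurrence, by Pascal's rule.\<close>

definition walks :: "('a \<Rightarrow> 'a \<Rightarrow> bool) \<Rightarrow> 'a set \<Rightarrow> nat \<Rightarrow> 'a \<Rightarrow> (nat \<Rightarrow> 'a) set" where
  "walks R A m a = {f \<in> {0..<m} \<rightarrow>\<^sub>E A. f 0 = a \<and> (\<forall>x. x + 1 < m \<longrightarrow> R (f x) (f (x + 1)))}"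

lemma finite_walks: "finite A \<Longrightarrow> finite (walks R A m a)"
  by (rule finite_subset[of _ "{0..<m} \<rightarrow>\<^sub>E A"]) (auto simp: walks_def intro: finite_PiE)

lemma walks_cong:
  assumes "\<And>u v. u \<in> A \<Longrightarrow> v \<in> A \<Longrightarrow> R u v = R' u v"
  shows "walks R A m a = walks R' A m a"
  using assms unfolding walks_def by (auto simp: PiE_def Pi_def)

lemma card_walks_Suc_0: "a \<in> A \<Longrightarrow> card (walks R A (Suc 0) a) = 1"
proof -
  assume "a \<in> A"
  then have "walks R A (Suc 0) a = {(\<lambda>_. undefined)(0 := a)}"
    unfolding walks_def by (auto simp: PiE_def extensional_def)
  then show ?thesis by simp
qed

lemma walks_Suc_Suc:
  assumes "a \<in> A"
  shows "walks R A (Suc (Suc m)) a = (\<Union>s\<in>{s \<in> A. R a s}. case_nat a ` walks R A (Suc m) s)"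
proof
  show "walks R A (Suc (Suc m)) a \<subseteq> (\<Union>s\<in>{s \<in> A. R a s}. case_nat a ` walks R A (Suc m) s)"
  proof
    fix f assume f: "f \<in> walks R A (Suc (Suc m)) a"
    have "f = case_nat a (\<lambda>y. f (Suc y))"
      using f by (auto simp: walks_def split: nat.split)
    moreover have "(\<lambda>y. f (Suc y)) \<in> walks R A (Suc m) (f 1)"
      using f by (auto simp: walks_def PiE_def extensional_def Pi_def)
    moreover have "f 1 \<in> A" "R a (f 1)"
      using f by (auto simp: walks_def PiE_def Pi_def)
    ultimately show "f \<in> (\<Union>s\<in>{s \<in> A. R a s}. case_nat a ` walks R A (Suc m) s)"
      by blast
  qed
next
  show "(\<Union>s\<in>{s \<in> A. R a s}. case_nat a ` walks R A (Suc m) s) \<subseteq> walks R A (Suc (Suc m)) a"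
  proof clarify
    fix s g assume s: "s \<in> A" "R a s" and g: "g \<in> walks R A (Suc m) s"
    have "case_nat a g \<in> {0..<Suc (Suc m)} \<rightarrow>\<^sub>E A"
      using g assms by (auto simp: walks_def PiE_def extensional_def Pi_def split: nat.splits)
    moreover have "R (case_nat a g x) (case_nat a g (x + 1))" if "x + 1 < Suc (Suc m)" for x
      using that g s by (cases x) (auto simp: walks_def)
    ultimately show "case_nat a g \<in> walks R A (Suc (Suc m)) a"
      by (simp add: walks_def)
  qed
qed

lemma card_walks_Suc_Suc:
  assumes "finite A" "a \<in> A"
  shows "card (walks R A (Suc (Suc m)) a) = (\<Sum>s\<in>{s \<in> A. R a s}. card (walks R A (Suc m) s))"
proof -
  have inj: "inj (case_nat a :: (nat \<Rightarrow> 'a) \<Rightarrow> nat \<Rightarrow> 'a)"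
  proof (rule injI)
    fix g h :: "nat \<Rightarrow> 'a"
    assume "case_nat a g = case_nat a h"
    then show "g = h" by (metis nat.case(2) ext)
  qed
  have "card (walks R A (Suc (Suc m)) a) = (\<Sum>s\<in>{s \<in> A. R a s}. card (case_nat a ` walks R A (Suc m) s))"
    unfolding walks_Suc_Suc[OF assms(2)]
  proof (rule card_UN_disjoint)
    show "finite {s \<in> A. R a s}" "\<forall>s\<in>{s \<in> A. R a s}. finite (case_nat a ` walks R A (Suc m) s)"
      using assms(1) finite_walks[OF assms(1)] by auto
    show "\<forall>s\<in>{s \<in> A. R a s}. \<forall>t\<in>{s \<in> A. R a s}. s \<noteq> t \<longrightarrow>
      case_nat a ` walks R A (Suc m) s \<inter> case_nat a ` walks R A (Suc m) t = {}"
      unfolding walks_def by (auto dest!: injD[OF inj])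
  qed
  also have "\<dots> = (\<Sum>s\<in>{s \<in> A. R a s}. card (walks R A (Suc m) s))"
    by (intro sum.cong refl card_image inj_on_subset[OF inj]) auto
  finally show ?thesis .
qed

definition cartesian_rel :: "('a \<Rightarrow> 'a \<Rightarrow> bool) \<Rightarrow> ('b \<Rightarrow> 'b \<Rightarrow> bool) \<Rightarrow> 'a \<times> 'b \<Rightarrow> 'a \<times> 'b \<Rightarrow> bool" where
  "cartesian_rel R S x y \<longleftrightarrow>
     (R (fst x) (fst y) \<and> snd x = snd y) \<or> (fst x = fst y \<and> S (snd x) (snd y))"

lemma card_walks_cartesian_rel_Suc_Suc:
  assumes "finite A" "finite B" "irreflp_on A R" "a \<in> A" "b \<in> B"
  shows "card (walks (cartesian_rel R S) (A \<times> B) (Suc (Suc m)) (a, b)) =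
    (\<Sum>a'\<in>{a' \<in> A. R a a'}. card (walks (cartesian_rel R S) (A \<times> B) (Suc m) (a', b))) +
    (\<Sum>b'\<in>{b' \<in> B. S b b'}. card (walks (cartesian_rel R S) (A \<times> B) (Suc m) (a, b')))"
    (is "_ = (\<Sum>a'\<in>?N. ?G (a', b)) + (\<Sum>b'\<in>?N'. ?G (a, b'))")
proof -
  have neighbours: "{y \<in> A \<times> B. cartesian_rel R S (a, b) y} = (\<lambda>a'. (a', b)) ` ?N \<union> Pair a ` ?N'"
    using assms(4,5) by (auto simp: cartesian_rel_def)
  have "(\<lambda>a'. (a', b)) ` ?N \<inter> Pair a ` ?N' = {}"
    using assms(3) by (auto simp: irreflp_on_def)
  then have "card (walks (cartesian_rel R S) (A \<times> B) (Suc (Suc m)) (a, b)) =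
      (\<Sum>y\<in>(\<lambda>a'. (a', b)) ` ?N. ?G y) + (\<Sum>y\<in>Pair a ` ?N'. ?G y)"
    using assms by (simp add: card_walks_Suc_Suc neighbours sum.union_disjoint)
  also have "\<dots> = (\<Sum>a'\<in>?N. ?G (a', b)) + (\<Sum>b'\<in>?N'. ?G (a, b'))"
    by (simp add: sum.reindex inj_on_def)
  finally show ?thesis .
qed

lemma sum_choose_Suc_split:
  fixes X :: "nat \<Rightarrow> 'a::comm_semiring_1"
  shows "(\<Sum>h = 0..Suc M. of_nat (Suc M choose h) * X h) =
    (\<Sum>h = 0..M. of_nat (M choose h) * X h) + (\<Sum>h = 0..M. of_nat (M choose h) * X (Suc h))"
proof -
  have "(\<Sum>h = 0..Suc M. of_nat (Suc M choose h) * X h) =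
      X 0 + (\<Sum>h = 0..M. of_nat (M choose Suc h) * X (Suc h)) + (\<Sum>h = 0..M. of_nat (M choose h) * X (Suc h))"
    by (subst sum.atLeast0_atMost_Suc_shift) (simp add: sum.distrib algebra_simps)
  also have "X 0 + (\<Sum>h = 0..M. of_nat (M choose Suc h) * X (Suc h)) =
      (\<Sum>h = 0..Suc M. of_nat (M choose h) * X h)"
    by (subst sum.atLeast0_atMost_Suc_shift) simp
  also have "\<dots> = (\<Sum>h = 0..M. of_nat (M choose h) * X h)"
    by (simp add: binomial_eq_0)
  finally show ?thesis .
qed

lemma binomial_convolution_of_recurrences:
  fixes G :: "nat \<Rightarrow> 'a \<Rightarrow> 'b \<Rightarrow> 'c::comm_semiring_1"
    and H :: "nat \<Rightarrow> 'a \<Rightarrow> 'c" and W :: "nat \<Rightarrow> 'b \<Rightarrow> 'c"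
  assumes closed: "\<And>a. a \<in> A \<Longrightarrow> N a \<subseteq> A" "\<And>b. b \<in> B \<Longrightarrow> N' b \<subseteq> B"
    and G_0: "\<And>a b. a \<in> A \<Longrightarrow> b \<in> B \<Longrightarrow> G 0 a b = H 0 a * W 0 b"
    and G_Suc: "\<And>M a b. a \<in> A \<Longrightarrow> b \<in> B \<Longrightarrow>
      G (Suc M) a b = (\<Sum>a'\<in>N a. G M a' b) + (\<Sum>b'\<in>N' b. G M a b')"
    and H_Suc: "\<And>h a. a \<in> A \<Longrightarrow> H (Suc h) a = (\<Sum>a'\<in>N a. H h a')"
    and W_Suc: "\<And>h b. b \<in> B \<Longrightarrow> W (Suc h) b = (\<Sum>b'\<in>N' b. W h b')"
    and "a \<in> A" "b \<in> B"
  shows "G M a b = (\<Sum>h = 0..M. of_nat (M choose h) * H h a * W (M - h) b)"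
  using \<open>a \<in> A\<close> \<open>b \<in> B\<close>
proof (induction M arbitrary: a b)
  case 0
  then show ?case by (simp add: G_0)
next
  case (Suc M)
  let ?X = "\<lambda>h. H h a * W (Suc M - h) b"
  have "G (Suc M) a b = (\<Sum>a'\<in>N a. G M a' b) + (\<Sum>b'\<in>N' b. G M a b')"
    using Suc.prems by (rule G_Suc)
  also have "\<dots> = (\<Sum>a'\<in>N a. \<Sum>h = 0..M. of_nat (M choose h) * H h a' * W (M - h) b) +
      (\<Sum>b'\<in>N' b. \<Sum>h = 0..M. of_nat (M choose h) * H h a * W (M - h) b')"
    using Suc.prems closed by (intro arg_cong2[where f = "(+)"] sum.cong refl Suc.IH) auto
  also have "\<dots> = (\<Sum>h = 0..M. of_nat (M choose h) * H (Suc h) a * W (M - h) b) +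
      (\<Sum>h = 0..M. of_nat (M choose h) * H h a * W (Suc (M - h)) b)"
    using Suc.prems
    by (simp add: sum.swap[of _ "N a"] sum.swap[of _ "N' b"] H_Suc W_Suc
        sum_distrib_left sum_distrib_right mult.assoc)
  also have "\<dots> = (\<Sum>h = 0..M. of_nat (M choose h) * ?X (Suc h)) + (\<Sum>h = 0..M. of_nat (M choose h) * ?X h)"
    by (intro arg_cong2[where f = "(+)"] sum.cong) (auto simp: Suc_diff_le mult.assoc)
  also have "\<dots> = (\<Sum>h = 0..Suc M. of_nat (Suc M choose h) * ?X h)"
    unfolding sum_choose_Suc_split by (rule add.commute)
  finally show ?case by (simp add: mult.assoc)
qed

lemma card_walks_cartesian_rel:
  assumes "finite A" "finite B" "irreflp_on A R" "a \<in> A" "b \<in> B"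
  shows "card (walks (cartesian_rel R S) (A \<times> B) (Suc M) (a, b)) =
    (\<Sum>h = 0..M. (M choose h) * card (walks R A (Suc h) a) * card (walks S B (Suc (M - h)) b))"
proof -
  let ?N = "\<lambda>a. {a' \<in> A. R a a'}" and ?N' = "\<lambda>b. {b' \<in> B. S b b'}"
  have G_0: "card (walks (cartesian_rel R S) (A \<times> B) (Suc 0) (a, b)) =
      card (walks R A (Suc 0) a) * card (walks S B (Suc 0) b)" if "a \<in> A" "b \<in> B" for a b
    using that by (simp add: card_walks_Suc_0)
  have G_Suc: "card (walks (cartesian_rel R S) (A \<times> B) (Suc (Suc M)) (a, b)) =
      (\<Sum>a'\<in>?N a. card (walks (cartesian_rel R S) (A \<times> B) (Suc M) (a', b))) +
      (\<Sum>b'\<in>?N' b. card (walks (cartesian_rel R S) (A \<times> B) (Suc M) (a, b')))"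
    if "a \<in> A" "b \<in> B" for M a b
    using assms(1-3) that by (rule card_walks_cartesian_rel_Suc_Suc)
  have H_Suc: "card (walks R A (Suc (Suc h)) a) = (\<Sum>a'\<in>?N a. card (walks R A (Suc h) a'))"
    if "a \<in> A" for h a
    using assms(1) that by (rule card_walks_Suc_Suc)
  have W_Suc: "card (walks S B (Suc (Suc h)) b) = (\<Sum>b'\<in>?N' b. card (walks S B (Suc h) b'))"
    if "b \<in> B" for h b
    using assms(2) that by (rule card_walks_Suc_Suc)
  have "\<And>a. ?N a \<subseteq> A" "\<And>b. ?N' b \<subseteq> B"
    by auto
  from binomial_convolution_of_recurrences[where
      G = "\<lambda>M a b. card (walks (cartesian_rel R S) (A \<times> B) (Suc M) (a, b))"
      and H = "\<lambda>h a. card (walks R A (Suc h) a)" and W = "\<lambda>h b. card (walks S B (Suc h) b)",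
      OF this G_0 G_Suc H_Suc W_Suc assms(4,5)]
  show ?thesis by simp
qed

theorem theorem3:
  fixes m n k i j :: nat
  assumes "m > 0" "n > 0" "k > 0"
    and "2 * i + 2 < n" and "2 * j + 2 < k"
  shows "card (WHom_grid m n k i j) =
    (\<Sum>h = 0..m - 1. ((m - 1) choose h) * card (Hom_path (h + 1) n i) * card (WHom_path (m - h) k j))"
proof -
  obtain M where m: "m = Suc M"
    using \<open>m > 0\<close> gr0_conv_Suc by blast
  define weak_adj where "weak_adj = (\<lambda>u v. u = v \<or> path_adj k u v)"
  have "WHom_grid m n k i j = walks (\<lambda>x y. x = y \<or> prod_adj n k x y) ({0..<n} \<times> {0..<k}) m (i, j)"
    by (simp add: WHom_grid_def walks_def)
  also have "\<dots> = walks (cartesian_rel (path_adj n) weak_adj) ({0..<n} \<times> {0..<k}) m (i, j)"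
    by (rule walks_cong) (auto simp: cartesian_rel_def prod_adj_def path_adj_def weak_adj_def)
  finally have grid: "card (WHom_grid m n k i j) =
      (\<Sum>h = 0..M. (M choose h) * card (walks (path_adj n) {0..<n} (Suc h) i) *
        card (walks weak_adj {0..<k} (Suc (M - h)) j))"
    using assms unfolding m
    by (simp add: card_walks_cartesian_rel irreflp_on_def path_adj_def)
  have "Hom_path a n i = walks (path_adj n) {0..<n} a i"
    and "WHom_path a k j = walks weak_adj {0..<k} a j" for a
    by (simp_all add: Hom_path_def WHom_path_def walks_def weak_adj_def)
  with grid show ?thesis
    unfolding m by (auto simp: Suc_diff_le intro!: sum.cong)
qed

end
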